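(* Let $\mathcal{G}=(G;T_1,T_2;\theta)\in\mathcal{G}_2^{sym}$ with $\mathcal{G}\neq\mathcal{K}_1$. Then $s_\theta$ fixes exactly one vertex of $G$, and this vertex has even degree at least $4$.
   Context: A multi-graph is finite and loop-free, possibly with parallel edges. A $2$-tree decomposition is $(G;T_1,T_2)$ with $G$ a multi-graph and $T_1,T_2$ spanning trees of $G$ whose edge sets partition $E(G)$. Let $\mathbb{Z}_2=\langle s\rangle$. A $\mathbb{Z}_2$-symmetric multi-graph is a pair $(G,\theta)$ with $\theta:\mathbb{Z}_2\to\mathrm{Aut}(G)$ a non-trivial homomorphism; write $s_\theta=\theta(s)$ and for an edge $e=v_1v_2$, $s_\theta(e)=s_\theta(v_1)s_\theta(v_2)$. A vertex $v$ (edge $e$) is fixed if $s_\theta(v)=v$ ($s_\theta(e)=e$). A symmetric $2$-tree decomposition is $(G;T_1,T_2;\theta)$ where $(G;T_1,T_2)$ is a $2$-tree decomposition, $(G,\theta)$ is $\mathbb{Z}_2$-symmetric and $s_\theta(T_i)=T_i$ for $i=1,2$. $\mathcal{G}_2^{sym}$ denotes the set of symmetric $2$-tree decompositions with no fixed edges, together with $\mathcal{K}_1=(K_1;T_1,T_2;\theta)$ where $K_1$ is a single vertex, the $T_i$ are edgeless and $\theta$ is trivial. *)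

theory Defs
  imports Main
begin

text \<open>A finite loop-free multigraph: vertex set V, edge set E, and an endpoint map
  assigning to every edge a set of exactly two distinct vertices (parallel edges allowed).\<close>
definition multigraph :: "'v set \<Rightarrow> 'e set \<Rightarrow> ('e \<Rightarrow> 'v set) \<Rightarrow> bool" where
  "multigraph V E ends \<longleftrightarrow> finite V \<and> finite E \<and>
     (\<forall>e\<in>E. ends e \<subseteq> V \<and> card (ends e) = 2)"

definition adj :: "('e \<Rightarrow> 'v set) \<Rightarrow> 'e set \<Rightarrow> ('v \<times> 'v) set" where
  "adj ends F = {(u, w). \<exists>e\<in>F. ends e = {u, w}}"

definition connected_by :: "('e \<Rightarrow> 'v set) \<Rightarrow> 'v set \<Rightarrow> 'e set \<Rightarrow> bool" where
  "connected_by ends V F \<longleftrightarrow> (\<forall>u\<in>V. \<forall>w\<in>V. (u, w) \<in> (adj ends F)\<^sup>*)"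

text \<open>Acyclic (a forest): no edge lies on a cycle, i.e. removing any edge of F
  disconnects its endpoints within F (this also excludes parallel edges in F).\<close>
definition acyclic_edges :: "('e \<Rightarrow> 'v set) \<Rightarrow> 'e set \<Rightarrow> bool" where
  "acyclic_edges ends F \<longleftrightarrow>
     (\<forall>e\<in>F. \<forall>u w. ends e = {u, w} \<longrightarrow> (u, w) \<notin> (adj ends (F - {e}))\<^sup>*)"

definition spanning_tree :: "'v set \<Rightarrow> 'e set \<Rightarrow> ('e \<Rightarrow> 'v set) \<Rightarrow> 'e set \<Rightarrow> bool" where
  "spanning_tree V E ends T \<longleftrightarrow> T \<subseteq> E \<and> connected_by ends V T \<and> acyclic_edges ends T"

definition two_tree_decomp :: "'v set \<Rightarrow> 'e set \<Rightarrow> ('e \<Rightarrow> 'v set) \<Rightarrow> 'e set \<Rightarrow> 'e set \<Rightarrow> bool" where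
  "two_tree_decomp V E ends T1 T2 \<longleftrightarrow> multigraph V E ends \<and>
     spanning_tree V E ends T1 \<and> spanning_tree V E ends T2 \<and>
     T1 \<union> T2 = E \<and> T1 \<inter> T2 = {}"

definition automorphism :: "'v set \<Rightarrow> 'e set \<Rightarrow> ('e \<Rightarrow> 'v set) \<Rightarrow> ('v \<Rightarrow> 'v) \<Rightarrow> ('e \<Rightarrow> 'e) \<Rightarrow> bool" where
  "automorphism V E ends sv se \<longleftrightarrow> bij_betw sv V V \<and> bij_betw se E E \<and>
     (\<forall>e\<in>E. ends (se e) = sv ` ends e)"

text \<open>A homomorphism theta: Z2 -> Aut(G) is determined by s_theta = theta(s), an automorphism
  with s_theta o s_theta = id. It is trivial iff s_theta is the identity automorphism.\<close>
definition z2_action :: "'v set \<Rightarrow> 'e set \<Rightarrow> ('e \<Rightarrow> 'v set) \<Rightarrow> ('v \<Rightarrow> 'v) \<Rightarrow> ('e \<Rightarrow> 'e) \<Rightarrow> bool" where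
  "z2_action V E ends sv se \<longleftrightarrow> automorphism V E ends sv se \<and>
     (\<forall>v\<in>V. sv (sv v) = v) \<and> (\<forall>e\<in>E. se (se e) = e)"

definition trivial_action :: "'v set \<Rightarrow> 'e set \<Rightarrow> ('v \<Rightarrow> 'v) \<Rightarrow> ('e \<Rightarrow> 'e) \<Rightarrow> bool" where
  "trivial_action V E sv se \<longleftrightarrow> (\<forall>v\<in>V. sv v = v) \<and> (\<forall>e\<in>E. se e = e)"

definition z2_symmetric :: "'v set \<Rightarrow> 'e set \<Rightarrow> ('e \<Rightarrow> 'v set) \<Rightarrow> ('v \<Rightarrow> 'v) \<Rightarrow> ('e \<Rightarrow> 'e) \<Rightarrow> bool" where
  "z2_symmetric V E ends sv se \<longleftrightarrow> multigraph V E ends \<and> z2_action V E ends sv se \<and>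
     \<not> trivial_action V E sv se"

definition sym_two_tree_decomp where
  "sym_two_tree_decomp V E ends T1 T2 sv se \<longleftrightarrow>
     two_tree_decomp V E ends T1 T2 \<and> z2_symmetric V E ends sv se \<and>
     se ` T1 = T1 \<and> se ` T2 = T2"

definition no_fixed_edges :: "'e set \<Rightarrow> ('e \<Rightarrow> 'e) \<Rightarrow> bool" where
  "no_fixed_edges E se \<longleftrightarrow> (\<forall>e\<in>E. se e \<noteq> e)"

definition is_K1 where
  "is_K1 V E ends T1 T2 sv se \<longleftrightarrow> card V = 1 \<and> E = {} \<and> T1 = {} \<and> T2 = {} \<and>
     trivial_action V E sv se"

definition in_G2sym where
  "in_G2sym V E ends T1 T2 sv se \<longleftrightarrow>
     (sym_two_tree_decomp V E ends T1 T2 sv se \<and> no_fixed_edges E se) \<or>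
     is_K1 V E ends T1 T2 sv se"

definition degree :: "'e set \<Rightarrow> ('e \<Rightarrow> 'v set) \<Rightarrow> 'v \<Rightarrow> nat" where
  "degree E ends v = card {e\<in>E. v \<in> ends e}"

end

theory Submission
  imports Defs "HOL-Library.Transitive_Closure_Table"
begin

text \<open>In a tree \<open>T\<close> on which \<open>s\<^sub>\<theta>\<close> acts without fixed edges, two fixed vertices would be
  joined by a path whose first edge \<open>e\<close> could be bypassed through the image path and
  the edge \<open>s\<^sub>\<theta>(e) \<noteq> e\<close>, contradicting acyclicity; the same bypass, applied to a
  shortest path from a vertex to its image, produces a fixed vertex. So \<open>s\<^sub>\<theta>\<close> fixes
  exactly one vertex \<open>v\<close>. The edges of \<open>T\<^sub>i\<close> at \<open>v\<close> are permuted by \<open>s\<^sub>\<theta>\<close> without fixed points, so their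
  number is even, and it is positive since \<open>T\<^sub>i\<close> is connected on at least two vertices.\<close>

lemma even_card_if_fixpoint_free_involution:
  assumes "finite S"
    and "\<And>x. x \<in> S \<Longrightarrow> f x \<in> S" "\<And>x. x \<in> S \<Longrightarrow> f (f x) = x" "\<And>x. x \<in> S \<Longrightarrow> f x \<noteq> x"
  shows "even (card S)"
  using assms
proof (induction S rule: finite_psubset_induct)
  case (psubset S)
  show ?case
  proof (cases "S = {}")
    case False
    then obtain x where x: "x \<in> S" by blast
    define S' where "S' = S - {x, f x}"
    have "S' \<subset> S" using x unfolding S'_def by auto
    moreover have "f y \<in> S'" if "y \<in> S'" for y
    proof -
      have "f y \<noteq> x" "f y \<noteq> f x"
        using that psubset.prems(2) x unfolding S'_def by (metis Diff_iff insertCI)+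
      then show ?thesis using that psubset.prems(1) unfolding S'_def by blast
    qed
    ultimately have "even (card S')"
      using psubset.IH psubset.prems(2,3) unfolding S'_def by blast
    moreover have "card S = card S' + 2"
    proof -
      have pair: "{x, f x} \<subseteq> S" "card {x, f x} = 2"
        using x psubset.prems(1,3) by (auto simp: card_insert_if dest: sym)
      then have "card {x, f x} \<le> card S" using psubset.hyps by (intro card_mono)
      with pair psubset.hyps show ?thesis unfolding S'_def by (simp add: card_Diff_subset)
    qed
    ultimately show ?thesis by simp
  qed simp
qed

lemma degree_Un_disjoint:
  "finite A \<Longrightarrow> finite B \<Longrightarrow> A \<inter> B = {} \<Longrightarrow>
     degree (A \<union> B) ends v = degree A ends v + degree B ends v"
  unfolding degree_def by (subst card_Un_disjoint[symmetric]) (auto intro: arg_cong[where f = card])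

lemma sym_adj: "sym (adj ends F)"
  by (auto simp: adj_def sym_def insert_commute)

lemma adj_Diff_singletonI: "f \<in> F \<Longrightarrow> f \<noteq> e \<Longrightarrow> ends f = {x, y} \<Longrightarrow> (x, y) \<in> adj ends (F - {e})"
  by (auto simp: adj_def)

lemma rtrancl_adj_Diff_if_avoids:
  assumes "rtrancl_path (\<lambda>x y. (x, y) \<in> adj ends F) x ps y" "a \<in> ends e" "a \<notin> set (x # ps)"
  shows "(x, y) \<in> (adj ends (F - {e}))\<^sup>*"
  using assms
proof (induction rule: rtrancl_path.induct)
  case (step x y ps z)
  from step.hyps(1) obtain f where f: "f \<in> F" "ends f = {x, y}" by (auto simp: adj_def)
  with step.prems have "f \<noteq> e" by auto
  with f have "(x, y) \<in> adj ends (F - {e})" by (intro adj_Diff_singletonI)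
  moreover have "(y, z) \<in> (adj ends (F - {e}))\<^sup>*" using step.IH step.prems by simp
  ultimately show ?case by (rule converse_rtrancl_into_rtrancl)
qed simp

lemma rtrancl_path_adj_subset:
  assumes "rtrancl_path (\<lambda>x y. (x, y) \<in> adj ends F) x ps y" "\<And>e. e \<in> F \<Longrightarrow> ends e \<subseteq> V"
  shows "set ps \<subseteq> V"
  using assms by (induction rule: rtrancl_path.induct) (auto simp: adj_def)

lemma rtrancl_path_adj_image:
  assumes "rtrancl_path (\<lambda>x y. (x, y) \<in> adj ends F) x ps y"
    and "\<And>e. e \<in> F \<Longrightarrow> se e \<in> F \<and> ends (se e) = sv ` ends e"
  shows "rtrancl_path (\<lambda>x y. (x, y) \<in> adj ends F) (sv x) (map sv ps) (sv y)"
  using assms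
proof (induction rule: rtrancl_path.induct)
  case (step x y ps z)
  then obtain e where "e \<in> F" "ends e = {x, y}" by (auto simp: adj_def)
  with step.prems have "(sv x, sv y) \<in> adj ends F" unfolding adj_def by force
  with step show ?case by (simp add: rtrancl_path.step)
qed (simp add: rtrancl_path.base)

lemma rtrancl_path_snocD:
  "rtrancl_path r x (xs @ [y]) z \<Longrightarrow>
     rtrancl_path r x xs (last (x # xs)) \<and> r (last (x # xs)) y \<and> y = z"
proof (induction xs arbitrary: x)
  case Nil
  then show ?case by (auto elim: rtrancl_path.cases intro: rtrancl_path.base)
next
  case (Cons w xs)
  then have "r x w" "rtrancl_path r w (xs @ [y]) z" by (auto elim: rtrancl_path.cases)
  with Cons.IH show ?case by (auto intro: rtrancl_path.step)
qed

lemma forest_no_bypass: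
  assumes "acyclic_edges ends F" "e \<in> F" "ends e = {a, b}"
    and "(b, c) \<in> (adj ends (F - {e}))\<^sup>*" "f \<in> F" "f \<noteq> e" "ends f = {c, a}"
  shows False
proof -
  have "(c, a) \<in> adj ends (F - {e})" using assms(5-7) by (rule adj_Diff_singletonI)
  with assms(4) have "(b, a) \<in> (adj ends (F - {e}))\<^sup>*" by (rule rtrancl_into_rtrancl)
  then have "(a, b) \<in> (adj ends (F - {e}))\<^sup>*" by (rule symD[OF sym_rtrancl[OF sym_adj]])
  with assms(1-3) show False unfolding acyclic_edges_def by blast
qed

locale involutive_tree =
  fixes V :: "'v set" and T :: "'e set" and ends :: "'e \<Rightarrow> 'v set"
    and sv :: "'v \<Rightarrow> 'v" and se :: "'e \<Rightarrow> 'e"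
  assumes ends_subset: "e \<in> T \<Longrightarrow> ends e \<subseteq> V"
    and connected: "connected_by ends V T"
    and acyclic: "acyclic_edges ends T"
    and sv_closed: "v \<in> V \<Longrightarrow> sv v \<in> V"
    and sv_involution: "v \<in> V \<Longrightarrow> sv (sv v) = v"
    and se_closed: "e \<in> T \<Longrightarrow> se e \<in> T"
    and se_involution: "e \<in> T \<Longrightarrow> se (se e) = e"
    and ends_se: "e \<in> T \<Longrightarrow> ends (se e) = sv ` ends e"
    and se_no_fixed: "e \<in> T \<Longrightarrow> se e \<noteq> e"
begin

abbreviation walk :: "'v \<Rightarrow> 'v list \<Rightarrow> 'v \<Rightarrow> bool" where
  "walk \<equiv> rtrancl_path (\<lambda>x y. (x, y) \<in> adj ends T)"

lemma obtain_path:
  assumes "x \<in> V" "y \<in> V"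
  obtains ps where "walk x ps y" "distinct (x # ps)"
proof -
  have "(x, y) \<in> (adj ends T)\<^sup>*" using connected assms unfolding connected_by_def by blast
  then have "(\<lambda>x y. (x, y) \<in> adj ends T)\<^sup>*\<^sup>* x y" by (simp add: rtranclp_rtrancl_eq)
  then obtain ps where "walk x ps y" by (auto simp: rtranclp_eq_rtrancl_path)
  then show ?thesis by (rule rtrancl_path_distinct) (rule that)
qed

lemma walk_subset:
  assumes "walk x ps y"
  shows "set ps \<subseteq> V"
  using assms ends_subset by (rule rtrancl_path_adj_subset)

lemma walk_image: "walk x ps y \<Longrightarrow> walk (sv x) (map sv ps) (sv y)"
  using se_closed ends_se by (blast intro: rtrancl_path_adj_image)

lemma sv_notin_image:
  assumes "x \<in> V" "S \<subseteq> V" "x \<notin> S"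
  shows "sv x \<notin> sv ` S"
proof -
  have "inj_on sv V" using sv_involution by (metis inj_on_inverseI)
  with assms show ?thesis by (simp add: inj_on_image_mem_iff)
qed

lemma image_edge:
  assumes "e \<in> T" "ends e = {x, y}"
  shows "se e \<in> T" "se e \<noteq> e" "ends (se e) = {sv x, sv y}"
  using assms se_closed se_no_fixed ends_se by auto

lemma fixed_vertex_unique:
  assumes "u \<in> V" "w \<in> V" "sv u = u" "sv w = w"
  shows "u = w"
proof (rule ccontr)
  assume "u \<noteq> w"
  obtain ps where path: "walk u ps w" "distinct (u # ps)" using obtain_path assms(1,2) .
  with \<open>u \<noteq> w\<close> obtain p qs where ps: "ps = p # qs"
    by (cases ps) (auto elim: rtrancl_path.cases)
  with path obtain e where e: "e \<in> T" "ends e = {u, p}" and tail: "walk p qs w"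
    by (auto simp: adj_def elim: rtrancl_path.cases)
  have u: "u \<in> ends e" "u \<notin> set (p # qs)" using e path ps by auto
  have "(p, w) \<in> (adj ends (T - {e}))\<^sup>*" using tail u by (rule rtrancl_adj_Diff_if_avoids)
  moreover have "(sv p, w) \<in> (adj ends (T - {e}))\<^sup>*"
  proof -
    have image: "walk (sv p) (map sv qs) w" using walk_image[OF tail] assms(4) by simp
    have "set (p # qs) \<subseteq> V" using walk_subset[OF path(1)] ps by simp
    then have "u \<notin> set (sv p # map sv qs)" using sv_notin_image[OF assms(1) _ u(2)] assms(3) by simp
    with image u(1) show ?thesis by (rule rtrancl_adj_Diff_if_avoids)
  qed
  ultimately have "(p, sv p) \<in> (adj ends (T - {e}))\<^sup>*"
    by (meson rtrancl_trans symD sym_adj sym_rtrancl)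
  moreover have "se e \<in> T" "se e \<noteq> e" "ends (se e) = {sv p, u}"
    using image_edge[OF e] assms(3) by (auto simp: insert_commute)
  ultimately show False using forest_no_bypass[OF acyclic e] by blast
qed

text \<open>Induction on the length of a path from \<open>a\<close> to \<open>sv a\<close>: if its last inner
  vertex \<open>y\<close> is not the image of its first one \<open>p\<close>, the path and its image bypass
  the first edge; otherwise the inner path from \<open>p\<close> to \<open>y = sv p\<close> is shorter.\<close>
lemma fixed_vertex_if_path_to_image:
  assumes "a \<in> V" "walk a ps (sv a)" "distinct (a # ps)"
  shows "\<exists>v\<in>V. sv v = v"
  using assms
proof (induction "length ps" arbitrary: a ps rule: less_induct)
  case less
  show ?case
  proof (cases "sv a = a")
    case False
    with less.prems obtain p qs where ps: "ps = p # qs"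
      by (cases ps) (auto elim: rtrancl_path.cases)
    with less.prems obtain e where e: "e \<in> T" "ends e = {a, p}" and tail: "walk p qs (sv a)"
      by (auto simp: adj_def elim: rtrancl_path.cases)
    have a: "a \<in> ends e" "a \<noteq> p" using e less.prems(3) ps by auto
    have pV: "p \<in> V" using walk_subset[OF less.prems(2)] ps by auto
    show ?thesis
    proof (cases "qs = []")
      case True
      then have "p = sv a" using tail by (auto elim: rtrancl_path.cases)
      then have "se e \<in> T" "se e \<noteq> e" "ends (se e) = {p, a}"
        using image_edge[OF e] sv_involution less.prems(1) by auto
      then show ?thesis using forest_no_bypass[OF acyclic e] by blast
    next
      case False
      then obtain ms where qs: "qs = ms @ [sv a]"
        using rtrancl_path_last[OF tail] by (metis append_butlast_last_id)
      define y where "y = last (p # ms)"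
      have inner: "walk p ms y" and last_edge: "(y, sv a) \<in> adj ends T"
        using rtrancl_path_snocD[OF tail[unfolded qs]] unfolding y_def by auto
      have dist: "distinct (a # p # ms @ [sv a])" using less.prems(3) ps qs by simp
      have msV: "set (p # ms) \<subseteq> V" using walk_subset inner pV by auto
      have y: "y \<in> set (p # ms)" "y \<in> V" using msV unfolding y_def by auto
      show ?thesis
      proof (cases "sv y = p")
        case True
        then have "y = sv p" using sv_involution[OF y(2)] by simp
        moreover have "length ms < length ps" using ps qs by simp
        ultimately show ?thesis using less.hyps[OF _ pV] inner dist by auto
      next
        case False
        obtain f where f: "f \<in> T" "ends f = {y, sv a}" using last_edge by (auto simp: adj_def)
        have "(p, y) \<in> (adj ends (T - {e}))\<^sup>*"
          using rtrancl_adj_Diff_if_avoids[OF inner a(1)] dist by auto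
        moreover have "(y, sv a) \<in> adj ends (T - {e})"
          using f e y(1) dist by (intro adj_Diff_singletonI) auto
        moreover have "(sv a, sv p) \<in> adj ends (T - {e})"
          using image_edge[OF e] by (intro adj_Diff_singletonI) auto
        moreover have "(sv p, sv y) \<in> (adj ends (T - {e}))\<^sup>*"
        proof (rule rtrancl_adj_Diff_if_avoids[OF walk_image[OF inner] a(1)])
          have "sv (sv a) \<notin> sv ` set (p # ms)"
            using sv_notin_image[OF sv_closed[OF less.prems(1)] msV] dist by auto
          then show "a \<notin> set (sv p # map sv ms)" using sv_involution less.prems(1) by simp
        qed
        ultimately have "(p, sv y) \<in> (adj ends (T - {e}))\<^sup>*"
          by (meson rtrancl_into_rtrancl rtrancl_trans)
        moreover have "se f \<in> T" "se f \<noteq> e" "ends (se f) = {sv y, a}"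
          using image_edge[OF f] sv_involution less.prems(1) e a(2) False
          by (auto simp: doubleton_eq_iff)
        ultimately show ?thesis using forest_no_bypass[OF acyclic e] by blast
      qed
    qed
  qed (use less.prems in blast)
qed

lemma fixed_vertex_exists:
  assumes "V \<noteq> {}"
  shows "\<exists>v\<in>V. sv v = v"
proof -
  obtain a where "a \<in> V" using assms by blast
  moreover obtain ps where "walk a ps (sv a)" "distinct (a # ps)"
    using obtain_path[OF \<open>a \<in> V\<close> sv_closed[OF \<open>a \<in> V\<close>]] .
  ultimately show ?thesis by (rule fixed_vertex_if_path_to_image)
qed

lemma even_degree_fixed_vertex:
  assumes "finite T" "sv v = v"
  shows "even (degree T ends v)"
  unfolding degree_def
proof (rule even_card_if_fixpoint_free_involution)
  show "finite {e \<in> T. v \<in> ends e}" using assms(1) by simp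
  show "se e \<in> {e \<in> T. v \<in> ends e}" if "e \<in> {e \<in> T. v \<in> ends e}" for e
    using that se_closed ends_se[of e] assms(2) by force
qed (use se_involution se_no_fixed in auto)

end

lemma degree_pos_if_connected:
  assumes "connected_by ends V T" "finite T" "v \<in> V" "w \<in> V" "v \<noteq> w"
  shows "degree T ends v \<noteq> 0"
proof -
  have "(v, w) \<in> (adj ends T)\<^sup>*" using assms(1,3,4) unfolding connected_by_def by blast
  with assms(5) obtain x where "(v, x) \<in> adj ends T" by (metis converse_rtranclE)
  then obtain e where "e \<in> T" "v \<in> ends e" unfolding adj_def by blast
  with assms(2) show ?thesis unfolding degree_def by auto
qed

lemma z2_symmetric_other_vertex:
  assumes "z2_symmetric V E ends sv se"
  obtains w where "w \<in> V" "w \<noteq> v"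
proof (rule ccontr)
  assume "\<not> thesis"
  with that have V: "V \<subseteq> {v}" by blast
  have "E = {}"
  proof
    show "E \<subseteq> {}"
    proof
      fix e assume "e \<in> E"
      with assms V have "ends e \<subseteq> {v}" "card (ends e) = 2"
        unfolding z2_symmetric_def multigraph_def by auto
      then show "e \<in> {}" using card_mono[of "{v}" "ends e"] by simp
    qed
  qed simp
  moreover have "sv ` V \<subseteq> V"
    using assms unfolding z2_symmetric_def z2_action_def automorphism_def bij_betw_def by simp
  ultimately have "trivial_action V E sv se" using V unfolding trivial_action_def by blast
  with assms show False unfolding z2_symmetric_def by blast
qed

lemma involutive_tree_if_sym_two_tree_decomp:
  assumes "sym_two_tree_decomp V E ends T1 T2 sv se" "no_fixed_edges E se" "T \<in> {T1, T2}"
  shows "involutive_tree V T ends sv se"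
proof -
  from assms(1,3) have T: "T \<subseteq> E" "connected_by ends V T" "acyclic_edges ends T" "se ` T = T"
    unfolding sym_two_tree_decomp_def two_tree_decomp_def spanning_tree_def by auto
  from assms(1) have "multigraph V E ends" "z2_action V E ends sv se"
    unfolding sym_two_tree_decomp_def z2_symmetric_def by auto
  then have ends: "\<And>e. e \<in> E \<Longrightarrow> ends e \<subseteq> V" "\<And>e. e \<in> E \<Longrightarrow> ends (se e) = sv ` ends e"
    and sv: "\<And>v. v \<in> V \<Longrightarrow> sv v \<in> V" "\<And>v. v \<in> V \<Longrightarrow> sv (sv v) = v"
    and se: "\<And>e. e \<in> E \<Longrightarrow> se (se e) = e"
    unfolding multigraph_def z2_action_def automorphism_def by (auto dest: bij_betwE)
  have se_T: "se e \<in> T" if "e \<in> T" for e using that T(4) by blast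
  from assms(2) have "\<And>e. e \<in> E \<Longrightarrow> se e \<noteq> e" unfolding no_fixed_edges_def by blast
  with T(1-3) ends sv se se_T show ?thesis by unfold_locales auto
qed

theorem lemma5p2:
  fixes V :: "'v set" and E :: "'e set" and ends :: "'e \<Rightarrow> 'v set"
    and T1 T2 :: "'e set" and sv :: "'v \<Rightarrow> 'v" and se :: "'e \<Rightarrow> 'e"
  assumes "in_G2sym V E ends T1 T2 sv se"
    and "\<not> is_K1 V E ends T1 T2 sv se"
  shows "\<exists>v\<in>V. sv v = v \<and> (\<forall>u\<in>V. sv u = u \<longrightarrow> u = v) \<and>
           even (degree E ends v) \<and> degree E ends v \<ge> 4"
proof -
  have decomp: "sym_two_tree_decomp V E ends T1 T2 sv se" "no_fixed_edges E se"
    using assms unfolding in_G2sym_def by auto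
  then have sym: "z2_symmetric V E ends sv se" and two_trees: "two_tree_decomp V E ends T1 T2"
    unfolding sym_two_tree_decomp_def by auto
  interpret T1: involutive_tree V T1 ends sv se
    using involutive_tree_if_sym_two_tree_decomp[OF decomp] by simp
  interpret T2: involutive_tree V T2 ends sv se
    using involutive_tree_if_sym_two_tree_decomp[OF decomp] by simp
  obtain v where v: "v \<in> V" "sv v = v"
    using T1.fixed_vertex_exists z2_symmetric_other_vertex[OF sym] by blast
  obtain w where w: "w \<in> V" "w \<noteq> v" using z2_symmetric_other_vertex[OF sym] .
  have E: "E = T1 \<union> T2" "T1 \<inter> T2 = {}" and "finite E"
    using two_trees unfolding two_tree_decomp_def multigraph_def by simp_all
  then have fin: "finite T1" "finite T2" by simp_all
  have "even (degree T1 ends v)" "even (degree T2 ends v)"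
    using T1.even_degree_fixed_vertex T2.even_degree_fixed_vertex fin v(2) by auto
  moreover have "degree T1 ends v \<noteq> 0" "degree T2 ends v \<noteq> 0"
    using degree_pos_if_connected[OF _ _ v(1) w(1) w(2)[symmetric]] T1.connected T2.connected fin
    by auto
  moreover have "degree E ends v = degree T1 ends v + degree T2 ends v"
    unfolding E(1) using fin E(2) by (rule degree_Un_disjoint)
  ultimately have "even (degree E ends v) \<and> degree E ends v \<ge> 4" by (auto elim!: evenE)
  with v show ?thesis using T1.fixed_vertex_unique by blast
qed

end
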